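(* Fix $r\ge2$ and $\epsilon>0$. For all sufficiently large $k$ the following holds: if a coloring of $[1,M_\epsilon]$ produced by the random scheme in the context (i.e., any outcome of it) has no bad $t$-term arithmetic progression with common difference greater than $b$, then every monochromatic $\lfloor k/2\rfloor$-term ascending wave $w_1<\dots<w_{\lfloor k/2\rfloor}$ in $[1,M_\epsilon]$ satisfies $w_{\lfloor k/2\rfloor}-w_{\lfloor k/2\rfloor-1}\geq b\,k^{1-\epsilon/2}$.
   Context: Ascending wave: positive integers $w_1<\dots<w_n$ with $w_{i+1}-w_i\ge w_i-w_{i-1}$ for $2\le i\le n-1$; $AW(k;r)$ is the least $N$ such that every $r$-coloring of $\{1,\dots,N\}$ has a monochromatic $k$-term ascending wave. Non-integer quantities used as integers are rounded down; $\log=\log_2$. Fix $r\ge2$, $\epsilon>0$, and $k$. Let $K=\lfloor k/(10(4r-4))\rfloor$, $b=AW(K;r-1)-1$, and $M_\epsilon=\lfloor k^{2r-1-\epsilon}/(2^{r-1}(40r)^{r^2-1})\rfloor$. For each $i\in\{0,\dots,r-1\}$ fix a coloring $\gamma_i$ of $\{1,\dots,b\}$ with colors from $\{0,\dots,r-1\}\setminus\{i\}$ having no monochromatic $K$-term ascending wave. Let $A$ be the $r^2\times 2r$ matrix with rows indexed by pairs $(j,i)$, $j\in\{0,\dots,r-1\}$, $i\in\{1,\dots,r\}$, whose row $(j,i)$ has entry $(m+j)\bmod r$ in position $2m+1$ and entry $(i+m-1+j)\bmod r$ in position $2m+2$, for $m=0,\dots,r-1$. Partition $[1,M_\epsilon]$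 into consecutive blocks $B_1,B_2,\dots$ of $b$ integers each (the last possibly partial), and group the blocks into consecutive groups of $2r$ blocks. For each group independently, choose a row $(s_1,\dots,s_{2r})$ of $A$ uniformly at random, give the $l$-th block of the group the label $s_l$, and color it by $\gamma_{s_l}$ (translated to that block). An arithmetic progression $x_1<\dots<x_t$ is good if for every $c\in\{0,\dots,r-1\}$ there is a term $x_i$ lying in a block $B_j$ such that $B_j$ and $B_{j+1}$ both have label $c$; otherwise it is bad. Here $t=\frac{(4r-2)(2r+1)}{\log(r^2/(r^2-1))}\log k+\frac{(2r+1)(\log r+1)}{\log(r^2/(r^2-1))}$. *)

theory Defs
  imports Complex_Main
begin

definition asc_wave :: "nat \<Rightarrow> (nat \<Rightarrow> nat) \<Rightarrow> bool" where
  "asc_wave n w \<longleftrightarrow>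
     (\<forall>i<n. 0 < w i) \<and>
     (\<forall>i. i + 1 < n \<longrightarrow> w i < w (i + 1)) \<and>
     (\<forall>i. 1 \<le> i \<and> i + 1 < n \<longrightarrow> w i - w (i - 1) \<le> w (i + 1) - w i)"

definition mono_wave :: "(nat \<Rightarrow> nat) \<Rightarrow> nat set \<Rightarrow> nat \<Rightarrow> (nat \<Rightarrow> nat) \<Rightarrow> bool" where
  "mono_wave chi S n w \<longleftrightarrow>
     asc_wave n w \<and> (\<forall>i<n. w i \<in> S) \<and> (\<forall>i<n. chi (w i) = chi (w 0))"

definition AW :: "nat \<Rightarrow> nat \<Rightarrow> nat" where
  "AW k r = (LEAST N. \<forall>chi :: nat \<Rightarrow> nat. (\<forall>x\<in>{1..N}. chi x < r) \<longrightarrow>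
                          (\<exists>w. mono_wave chi {1..N} k w))"

text \<open>Entry of the matrix A in row (j,i) at (0-based) position l, i.e. position l+1:
  position 2m+1 has (m+j) mod r, position 2m+2 has (i+m-1+j) mod r.\<close>
definition A_entry :: "nat \<Rightarrow> nat \<times> nat \<Rightarrow> nat \<Rightarrow> nat" where
  "A_entry r row l =
     (let j = fst row; i = snd row; m = l div 2 in
      if even l then (m + j) mod r else (i + m - 1 + j) mod r)"

text \<open>Label of the (0-based) block q, given the chosen row rho g of each (0-based) group g
  of 2r consecutive blocks.\<close>
definition block_label :: "nat \<Rightarrow> (nat \<Rightarrow> nat \<times> nat) \<Rightarrow> nat \<Rightarrow> nat" where
  "block_label r rho q = A_entry r (rho (q div (2 * r))) (q mod (2 * r))"

definition block_of :: "nat \<Rightarrow> nat \<Rightarrow> nat" where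
  "block_of b x = (x - 1) div b"

definition scheme_color :: "nat \<Rightarrow> nat \<Rightarrow> (nat \<Rightarrow> nat \<Rightarrow> nat) \<Rightarrow> (nat \<Rightarrow> nat \<times> nat) \<Rightarrow> nat \<Rightarrow> nat" where
  "scheme_color r b gamma rho x = gamma (block_label r rho (block_of b x)) ((x - 1) mod b + 1)"

definition good_AP :: "nat \<Rightarrow> nat \<Rightarrow> nat \<Rightarrow> (nat \<Rightarrow> nat \<times> nat) \<Rightarrow> nat \<Rightarrow> nat \<Rightarrow> nat \<Rightarrow> bool" where
  "good_AP r b M rho t a d \<longleftrightarrow>
     (\<forall>c<r. \<exists>i<t. let q = block_of b (a + i * d) in
        (q + 1) * b + 1 \<le> M \<and> block_label r rho q = c \<and> block_label r rho (q + 1) = c)"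

end

theory Submission
  imports Defs
begin

text \<open>
  Let w be a monochromatic ascending wave of colour c. No term of w lies in a block labelled c,
  because gamma i avoids colour i, and no K consecutive terms of w lie in one block, because
  gamma i has no monochromatic K-term wave. Since every 4r consecutive blocks contain one labelled
  c, some gap among the first (4r-1)(K-1) terms exceeds b, and then so do all later gaps.
  If d = w(s+1) - w(s) > b, the progression w(s), w(s) + d, ..., w(s) + (t-1)d is good, so one
  of its terms x lies in a block which, together with the next block, is labelled c. The wave
  term w(s+i) >= x must jump over both blocks, and this forces (t-1) g(s+t-1) >= (t-1) g(s) + b
  for the gaps g. Over the remaining k/4 or so terms the last gap therefore grows to about
  b k / (4(t-1)^2), which exceeds b k^(1-eps/2) since t = O(log k).
\<close>

lemma ln_le_powr_div:
  fixes x c :: real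
  assumes "0 < x" "0 < c"
  shows "ln x \<le> x powr c / c"
proof -
  have "c * ln x = ln (x powr c)" using assms by (simp add: ln_powr)
  also have "\<dots> \<le> x powr c - 1" using assms by (intro ln_le_minus_one) simp
  finally show ?thesis using assms by (simp add: pos_le_divide_eq mult.commute)
qed

lemma eventually_sq_log_powr_le:
  fixes A B e :: real
  assumes "0 < e" "0 \<le> A" "0 \<le> B"
  shows "\<forall>\<^sub>F x in at_top. (A * log 2 x + B)\<^sup>2 * x powr (1 - e / 2) \<le> x / 4"
proof -
  define C where "C = A / (e / 8 * ln 2) + B"
  have C: "0 \<le> C" using assms unfolding C_def by simp
  have "\<forall>\<^sub>F x in at_top. max 1 ((4 * C\<^sup>2) powr (4 / e)) \<le> x" by (rule eventually_ge_at_top)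
  then show ?thesis
  proof eventually_elim
    case (elim x)
    then have x1: "1 \<le> x" and xD: "(4 * C\<^sup>2) powr (4 / e) \<le> x" by auto
    have "log 2 x = ln x / ln 2" by (simp add: log_def)
    also have "\<dots> \<le> (x powr (e / 8) / (e / 8)) / ln 2"
      using ln_le_powr_div[of x "e / 8"] x1 assms(1) by (intro divide_right_mono) auto
    finally have "log 2 x \<le> x powr (e / 8) / (e / 8 * ln 2)" by simp
    moreover have "1 \<le> x powr (e / 8)" using x1 assms(1) by (intro ge_one_powr_ge_zero) auto
    ultimately have "A * log 2 x + B \<le> A * (x powr (e / 8) / (e / 8 * ln 2)) + B * x powr (e / 8)"
      using assms(2,3) by (intro add_mono mult_left_mono) (auto simp: mult_le_cancel_left1)
    also have "\<dots> = C * x powr (e / 8)" unfolding C_def by (simp add: field_simps)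
    finally have "A * log 2 x + B \<le> C * x powr (e / 8)" .
    moreover have "0 \<le> A * log 2 x + B" using x1 assms(2,3) by simp
    ultimately have "(A * log 2 x + B)\<^sup>2 \<le> (C * x powr (e / 8))\<^sup>2" by (rule power_mono)
    also have "\<dots> = C\<^sup>2 * x powr (e / 4)"
      by (simp add: power_mult_distrib power2_eq_square powr_add[symmetric])
    finally have sq: "(A * log 2 x + B)\<^sup>2 \<le> C\<^sup>2 * x powr (e / 4)" .
    have "4 * C\<^sup>2 = ((4 * C\<^sup>2) powr (4 / e)) powr (e / 4)"
      using assms(1) by (simp add: powr_powr)
    also have "\<dots> \<le> x powr (e / 4)" using xD assms(1) by (intro powr_mono2) auto
    finally have large: "4 * C\<^sup>2 \<le> x powr (e / 4)" .
    have "(A * log 2 x + B)\<^sup>2 * x powr (1 - e / 2) \<le> C\<^sup>2 * x powr (e / 4) * x powr (1 - e / 2)"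
      using sq by (rule mult_right_mono) simp
    also have "\<dots> = C\<^sup>2 * x powr (1 - e / 4)"
      using x1 by (simp add: mult.assoc powr_add[symmetric])
    also have "\<dots> \<le> x powr (e / 4) / 4 * x powr (1 - e / 4)"
      using large by (intro mult_right_mono) auto
    also have "\<dots> = x / 4" using x1 by (simp add: powr_add[symmetric])
    finally show ?case .
  qed
qed

lemma eventually_floor_log_sq_powr_le:
  fixes A B e :: real
  assumes "0 < e" "0 \<le> A" "2 \<le> B"
  shows "\<forall>\<^sub>F k in sequentially. 2 \<le> nat \<lfloor>A * log 2 (real k) + B\<rfloor> \<and>
           real (nat \<lfloor>A * log 2 (real k) + B\<rfloor> - 1) ^ 2 * real k powr (1 - e / 2) \<le> real k / 4"
proof -
  have "\<forall>\<^sub>F k in sequentially. (A * log 2 (real k) + B)\<^sup>2 * real k powr (1 - e / 2) \<le> real k / 4"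
    using eventually_sq_log_powr_le[of e A B] assms filterlim_real_sequentially
    by (auto simp: filterlim_iff)
  moreover have "\<forall>\<^sub>F k in sequentially. 1 \<le> k" by (rule eventually_ge_at_top)
  ultimately show ?thesis
  proof eventually_elim
    case (elim k)
    define u where "u = A * log 2 (real k) + B"
    have "0 \<le> log 2 (real k)" using elim by simp
    then have u2: "2 \<le> u" using assms unfolding u_def by (simp add: add_increasing)
    then have "real (nat \<lfloor>u\<rfloor> - 1) \<le> u" by linarith
    then have "real (nat \<lfloor>u\<rfloor> - 1) ^ 2 \<le> u\<^sup>2" by (intro power_mono) auto
    then have "real (nat \<lfloor>u\<rfloor> - 1) ^ 2 * real k powr (1 - e / 2) \<le> u\<^sup>2 * real k powr (1 - e / 2)"
      by (rule mult_right_mono) simp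
    then show ?case using elim u2 unfolding u_def by linarith
  qed
qed

lemma log2_ratio_bounds:
  fixes y :: real
  assumes "2 \<le> y"
  shows "0 < log 2 (y / (y - 1))" "log 2 (y / (y - 1)) \<le> 1"
proof -
  have "1 < y / (y - 1)" "y / (y - 1) \<le> 2" using assms by (simp_all add: field_simps)
  then show "0 < log 2 (y / (y - 1))" "log 2 (y / (y - 1)) \<le> 1" by simp_all
qed

lemma asc_wave_step: "asc_wave n w \<Longrightarrow> i + 1 < n \<Longrightarrow> w i < w (i + 1)"
  unfolding asc_wave_def by blast

lemma asc_wave_gap_step:
  assumes "asc_wave n w" "i + 2 < n"
  shows "w (i + 1) - w i \<le> w (i + 2) - w (i + 1)"
proof -
  have "\<forall>j. 1 \<le> j \<and> j + 1 < n \<longrightarrow> w j - w (j - 1) \<le> w (j + 1) - w j"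
    using assms(1) unfolding asc_wave_def by blast
  from spec[OF this, of "i + 1"] show ?thesis using assms(2) by simp
qed

lemma asc_wave_less:
  assumes "asc_wave n w" "i < j" "j < n"
  shows "w i < w j"
  using assms(2,3)
proof (induction j)
  case 0
  then show ?case by simp
next
  case (Suc j)
  have "w j < w (Suc j)" using asc_wave_step[OF assms(1), of j] Suc.prems by simp
  then show ?case using Suc by (cases "i = j") auto
qed

lemma asc_wave_le: "asc_wave n w \<Longrightarrow> i \<le> j \<Longrightarrow> j < n \<Longrightarrow> w i \<le> w j"
  using asc_wave_less[of n w i j] by (cases "i = j") auto

lemma asc_wave_gap_mono:
  assumes "asc_wave n w" "i \<le> j" "j + 1 < n"
  shows "w (i + 1) - w i \<le> w (j + 1) - w j"
  using assms(2,3)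
proof (induction j)
  case 0
  then show ?case by simp
next
  case (Suc j)
  have "w (j + 1) - w j \<le> w (j + 2) - w (j + 1)"
    using asc_wave_gap_step[OF assms(1), of j] Suc.prems by simp
  then show ?case using Suc by (cases "i = Suc j") auto
qed

lemma asc_wave_shift:
  assumes "asc_wave n w" "i + m \<le> n"
  shows "asc_wave m (\<lambda>j. w (i + j))"
  unfolding asc_wave_def
proof (intro conjI allI impI)
  fix j
  show "j < m \<Longrightarrow> 0 < w (i + j)" using assms unfolding asc_wave_def by simp
  show "w (i + j) < w (i + (j + 1))" if "j + 1 < m"
  proof -
    have "i + j + 1 < n" using that assms(2) by simp
    then show ?thesis using assms(1) unfolding asc_wave_def by simp
  qed
  assume j: "1 \<le> j \<and> j + 1 < m"
  then have "w (i + j) - w (i + j - 1) \<le> w (i + j + 1) - w (i + j)"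
    using assms unfolding asc_wave_def by simp
  moreover have "i + (j - 1) = i + j - 1" using j by simp
  ultimately show "w (i + j) - w (i + (j - 1)) \<le> w (i + (j + 1)) - w (i + j)" by simp
qed

lemma asc_wave_translate:
  assumes "asc_wave m v" "\<And>j. j < m \<Longrightarrow> a < v j"
  shows "asc_wave m (\<lambda>j. v j - a)"
  unfolding asc_wave_def
proof (intro conjI allI impI)
  fix j
  show "j < m \<Longrightarrow> 0 < v j - a" using assms(2) by simp
  show "v j - a < v (j + 1) - a" if "j + 1 < m"
  proof -
    have "a < v j" "v j < v (j + 1)" using assms that unfolding asc_wave_def by auto
    then show ?thesis by simp
  qed
  assume j: "1 \<le> j \<and> j + 1 < m"
  then have "a < v (j - 1)" "a < v j" "a < v (j + 1)" using assms(2) by auto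
  then show "v j - a - (v (j - 1) - a) \<le> v (j + 1) - a - (v j - a)"
    using assms(1) j unfolding asc_wave_def by simp
qed

lemma block_of_bounds:
  assumes "1 \<le> b" "1 \<le> x"
  shows "block_of b x * b < x" "x \<le> block_of b x * b + b"
proof -
  have "(x - 1) div b * b + (x - 1) mod b = x - 1" by simp
  moreover have "(x - 1) mod b < b" using assms by simp
  ultimately show "block_of b x * b < x" "x \<le> block_of b x * b + b"
    unfolding block_of_def using assms by linarith+
qed

lemma block_of_offset:
  assumes "1 \<le> x"
  shows "(x - 1) mod b + 1 = x - block_of b x * b"
proof -
  have "(x - 1) div b * b + (x - 1) mod b = x - 1" by simp
  then show ?thesis unfolding block_of_def using assms by linarith
qed

lemma block_of_mono: "x \<le> y \<Longrightarrow> block_of b x \<le> block_of b y"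
  unfolding block_of_def by (intro div_le_mono diff_le_mono)

lemma block_of_le_Suc: "y \<le> x + b \<Longrightarrow> block_of b y \<le> Suc (block_of b x)"
proof (cases "b = 0")
  case False
  assume "y \<le> x + b"
  then have "block_of b y \<le> (x - 1 + b) div b" unfolding block_of_def by (intro div_le_mono) simp
  also have "\<dots> = Suc (block_of b x)" using False unfolding block_of_def by simp
  finally show ?thesis .
qed (simp add: block_of_def)

lemma block_label_less: "0 < r \<Longrightarrow> block_label r rho q < r"
  unfolding block_label_def A_entry_def Let_def by simp

lemma block_label_hits_color:
  assumes rows: "\<And>g. fst (rho g) < r" and c: "c < r"
  shows "\<exists>q. q0 \<le> q \<and> q < q0 + 4 * r \<and> block_label r rho q = c"
proof -
  \<comment> \<open>Group g starts within 2r blocks after q0, and its even positions 2m, m < r, carry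
    the labels (m + fst (rho g)) mod r, i.e. every colour.\<close>
  define g where "g = q0 div (2 * r) + 1"
  define j where "j = fst (rho g)"
  define m where "m = (c + r - j) mod r"
  define q where "q = 2 * r * g + 2 * m"
  have j: "j < r" and m: "m < r" using rows c unfolding j_def m_def by simp_all
  have "q div (2 * r) = g" "q mod (2 * r) = 2 * m" using m unfolding q_def by simp_all
  then have "block_label r rho q = (m + j) mod r"
    unfolding block_label_def A_entry_def Let_def j_def by simp
  also have "\<dots> = c" using j c unfolding m_def by (simp add: mod_add_left_eq)
  finally have "block_label r rho q = c" .
  moreover have "q0 \<le> q" "q < q0 + 4 * r"
  proof -
    have "q0 div (2 * r) * (2 * r) + q0 mod (2 * r) = q0" by (rule div_mult_mod_eq)
    moreover have "q0 mod (2 * r) < 2 * r" using c by simp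
    moreover have "q = q0 div (2 * r) * (2 * r) + 2 * r + 2 * m"
      unfolding q_def g_def by (simp add: algebra_simps)
    ultimately show "q0 \<le> q" "q < q0 + 4 * r" using m by linarith+
  qed
  ultimately show ?thesis by blast
qed

locale block_scheme =
  fixes r b K :: nat and gamma :: "nat \<Rightarrow> nat \<Rightarrow> nat" and rho :: "nat \<Rightarrow> nat \<times> nat"
  assumes block_size_pos: "1 \<le> b"
    and gamma_avoids: "\<And>i x. i < r \<Longrightarrow> x \<in> {1..b} \<Longrightarrow> gamma i x < r \<and> gamma i x \<noteq> i"
    and gamma_no_wave: "\<And>i v. i < r \<Longrightarrow> \<not> mono_wave (gamma i) {1..b} K v"
    and rho_rows: "\<And>g. rho g \<in> {..<r} \<times> {1..r}"
begin

abbreviation "chi \<equiv> scheme_color r b gamma rho"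
abbreviation "label \<equiv> block_label r rho"
abbreviation "blk \<equiv> block_of b"

lemma row_index_less: "fst (rho g) < r"
  using rho_rows[of g] by (auto simp: mem_Times_iff)

lemma label_less: "label q < r"
  using row_index_less[of 0] by (intro block_label_less) simp

lemma chi_eq:
  assumes "1 \<le> x"
  shows "chi x = gamma (label (blk x)) (x - blk x * b)"
  unfolding scheme_color_def using block_of_offset[OF assms] by simp

lemma chi_ne_label:
  assumes "1 \<le> x"
  shows "chi x < r" "chi x \<noteq> label (blk x)"
proof -
  have "x - blk x * b \<in> {1..b}" using block_of_bounds[OF block_size_pos assms] by auto
  then show "chi x < r" "chi x \<noteq> label (blk x)"
    using gamma_avoids[OF label_less] chi_eq[OF assms] by auto
qed

lemma no_mono_wave_in_block:
  assumes v: "asc_wave K v" and same: "\<And>j. j < K \<Longrightarrow> chi (v j) = chi (v 0) \<and> blk (v j) = q"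
  shows False
proof -
  have bounds: "q * b < v j \<and> v j \<le> q * b + b" if "j < K" for j
    using block_of_bounds[OF block_size_pos, of "v j"] v same[OF that] that
    unfolding asc_wave_def by auto
  define u where "u j = v j - q * b" for j
  have color: "gamma (label q) (u j) = chi (v j)" if "j < K" for j
    using chi_eq[of "v j"] same[OF that] bounds[OF that] unfolding u_def by simp
  have "mono_wave (gamma (label q)) {1..b} K u"
    unfolding mono_wave_def
  proof (intro conjI allI impI)
    show "asc_wave K u" unfolding u_def using v bounds by (intro asc_wave_translate) auto
    show "u j \<in> {1..b}" if "j < K" for j using bounds[OF that] unfolding u_def by auto
    show "gamma (label q) (u j) = gamma (label q) (u 0)" if "j < K" for j
      using color[OF that] color[of 0] same[OF that] that by simp
  qed
  then show False using gamma_no_wave[OF label_less] by blast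
qed

end

locale scheme_wave = block_scheme +
  fixes n M t :: nat and w :: "nat \<Rightarrow> nat"
  assumes wave: "mono_wave chi {1..M} n w"
    and progressions_good: "\<And>a d. 1 \<le> a \<Longrightarrow> a + (t - 1) * d \<le> M \<Longrightarrow> b < d \<Longrightarrow> good_AP r b M rho t a d"
    and wave_nonempty: "1 \<le> n"
begin

abbreviation "gap i \<equiv> w (i + 1) - w i"
abbreviation "wave_color \<equiv> chi (w 0)"

lemma wave_asc: "asc_wave n w"
  using wave unfolding mono_wave_def by simp

lemma wave_range: "i < n \<Longrightarrow> 1 \<le> w i \<and> w i \<le> M"
  using wave unfolding mono_wave_def by auto

lemma chi_wave: "i < n \<Longrightarrow> chi (w i) = wave_color"
  using wave unfolding mono_wave_def by blast

lemma wave_color_less: "wave_color < r"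
  using chi_ne_label(1)[of "w 0"] wave_range[of 0] wave_nonempty by simp

lemma label_ne_wave_color: "i < n \<Longrightarrow> label (blk (w i)) \<noteq> wave_color"
  using chi_ne_label(2)[of "w i"] wave_range[of i] chi_wave[of i] by simp

lemma gap_mono: "i \<le> j \<Longrightarrow> j + 1 < n \<Longrightarrow> gap i \<le> gap j"
  by (rule asc_wave_gap_mono[OF wave_asc])

lemma block_advances:
  assumes "1 \<le> K" "i + K \<le> n"
  shows "blk (w i) < blk (w (i + K - 1))"
proof (rule ccontr)
  assume "\<not> ?thesis"
  then have last_le: "blk (w (i + K - 1)) \<le> blk (w i)" by simp
  have "blk (w (i + j)) = blk (w i)" if "j < K" for j
  proof (rule antisym)
    have "w (i + j) \<le> w (i + K - 1)" using that assms by (intro asc_wave_le[OF wave_asc]) auto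
    from le_trans[OF block_of_mono[OF this] last_le] show "blk (w (i + j)) \<le> blk (w i)" .
    show "blk (w i) \<le> blk (w (i + j))"
      using that assms by (intro block_of_mono asc_wave_le[OF wave_asc]) auto
  qed
  moreover have "chi (w (i + j)) = chi (w (i + 0))" if "j < K" for j
    using chi_wave[of "i + j"] chi_wave[of i] that assms by simp
  ultimately have "chi (w (i + j)) = chi (w (i + 0)) \<and> blk (w (i + j)) = blk (w i)" if "j < K" for j
    using that by blast
  from no_mono_wave_in_block[OF asc_wave_shift[OF wave_asc assms(2)] this] show False .
qed

lemma big_gap_across_label:
  assumes "i \<le> j" "j < n" "blk (w i) \<le> q" "q \<le> blk (w j)" "label q = wave_color"
  shows "\<exists>l. i \<le> l \<and> l < j \<and> b < gap l"
  using assms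
proof (induction j)
  case 0
  then show ?case using label_ne_wave_color[of 0] by simp
next
  case (Suc j)
  show ?case
  proof (cases "i \<le> j \<and> q \<le> blk (w j)")
    case True
    then show ?thesis using Suc by force
  next
    case False
    have "q \<noteq> blk (w (Suc j))" using Suc.prems label_ne_wave_color[of "Suc j"] by auto
    moreover have "i \<noteq> Suc j"
    proof
      assume "i = Suc j"
      then have "q = blk (w (Suc j))" using Suc.prems by simp
      with \<open>q \<noteq> blk (w (Suc j))\<close> show False by simp
    qed
    ultimately have "i \<le> j" "blk (w j) < q" "q < blk (w (Suc j))" using False Suc.prems by auto
    then have "\<not> w (Suc j) \<le> w j + b" using block_of_le_Suc[of "w (Suc j)" "w j" b] by linarith
    then show ?thesis using \<open>i \<le> j\<close> by auto
  qed
qed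

lemma early_big_gap:
  assumes "2 \<le> K" "(4 * r - 1) * (K - 1) < n"
  shows "\<exists>i < (4 * r - 1) * (K - 1). b < gap i"
proof -
  have advance: "blk (w 0) + j \<le> blk (w (j * (K - 1)))" if "j \<le> 4 * r - 1" for j
    using that
  proof (induction j)
    case 0
    then show ?case by simp
  next
    case (Suc j)
    have "Suc j * (K - 1) \<le> (4 * r - 1) * (K - 1)" using Suc.prems by (intro mult_le_mono1)
    then have "j * (K - 1) + K \<le> n" using assms by (simp add: algebra_simps)
    then have "blk (w (j * (K - 1))) < blk (w (j * (K - 1) + K - 1))"
      using block_advances assms(1) by simp
    moreover have "j * (K - 1) + K - 1 = Suc j * (K - 1)" using assms(1) by (simp add: algebra_simps)
    ultimately show ?case using Suc by simp
  qed
  obtain q where q: "blk (w 0) \<le> q" "q < blk (w 0) + 4 * r" "label q = wave_color"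
    using block_label_hits_color[of rho r wave_color "blk (w 0)"] row_index_less wave_color_less by blast
  have "q \<le> blk (w ((4 * r - 1) * (K - 1)))" using advance[of "4 * r - 1"] q(2) by simp
  then show ?thesis using big_gap_across_label[OF _ assms(2) q(1) _ q(3)] by auto
qed

lemma wave_skips_label_pair:
  assumes "1 \<le> x" "label (blk x) = wave_color" "label (Suc (blk x)) = wave_color"
    and "i < n" "x \<le> w i"
  shows "x + b < w i"
proof (rule ccontr)
  assume "\<not> x + b < w i"
  then have "blk (w i) \<le> Suc (blk x)" by (intro block_of_le_Suc) simp
  moreover have "blk x \<le> blk (w i)" using assms(5) by (rule block_of_mono)
  ultimately have "label (blk (w i)) = wave_color"
    using assms(2,3) by (cases "blk (w i) = blk x") (auto simp: le_Suc_eq)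
  then show False using label_ne_wave_color[OF assms(4)] by simp
qed

lemma gap_growth:
  assumes t: "2 \<le> t" and s: "s + t < n" and big: "b < gap s"
  shows "b + (t - 1) * gap s \<le> (t - 1) * gap (s + (t - 1))"
proof -
  define T d G where "T = t - 1" and "d = gap s" and "G = gap (s + T)"
  have gaps_between: "d \<le> gap (s + i) \<and> gap (s + i) \<le> G" if "i \<le> T" for i
    unfolding d_def G_def using that s t T_def gap_mono[of s "s + i"] gap_mono[of "s + i" "s + T"] by simp
  have terms_between: "w s + i * d \<le> w (s + i) \<and> w (s + i) \<le> w s + i * G" if "i \<le> T" for i
    using that
  proof (induction i)
    case 0
    then show ?case by simp
  next
    case (Suc i)
    have "w (s + i) < w (s + i + 1)" using asc_wave_step[OF wave_asc] Suc.prems s T_def by simp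
    then have "w (s + Suc i) = w (s + i) + gap (s + i)" by simp
    then show ?case using Suc gaps_between[of i] by simp
  qed
  have "1 \<le> w s" "w s + T * d \<le> w (s + T)" "w (s + T) \<le> M"
    using wave_range[of s] wave_range[of "s + T"] terms_between[of T] s T_def by auto
  \<comment> \<open>Some term of the good progression lies in a block that, like the next one, is labelled
    by the wave's colour; the wave term above it has to skip both blocks.\<close>
  then have "good_AP r b M rho t (w s) d"
    using progressions_good big unfolding T_def d_def by simp
  then obtain i where i: "i < t" "label (blk (w s + i * d)) = wave_color"
      "label (Suc (blk (w s + i * d))) = wave_color"
    using wave_color_less unfolding good_AP_def Let_def by auto
  then have "i \<le> T" using T_def by simp
  then have "w s + i * d + b < w (s + i)" "w (s + i) \<le> w s + i * G"
    using wave_skips_label_pair[OF _ i(2,3)] terms_between[of i] \<open>1 \<le> w s\<close> s T_def by auto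
  then have "b + i * d \<le> i * G" by simp
  moreover obtain e where "T = i + e" using \<open>i \<le> T\<close> le_Suc_ex by blast
  then have "T * d = i * d + e * d" "T * G = i * G + e * G" by (simp_all add: add_mult_distrib)
  moreover have "e * d \<le> e * G" using gaps_between[of 0] by simp
  ultimately show ?thesis unfolding T_def d_def G_def by linarith
qed

lemma gap_telescope:
  assumes t: "2 \<le> t" and big: "\<And>s. P \<le> s \<Longrightarrow> s + 1 < n \<Longrightarrow> b < gap s"
  shows "P + j * (t - 1) + 1 < n \<Longrightarrow> j * b + (t - 1) * gap P \<le> (t - 1) * gap (P + j * (t - 1))"
proof (induction j)
  case 0
  then show ?case by simp
next
  case (Suc j)
  define s where "s = P + j * (t - 1)"
  have "s + t < n" "s + (t - 1) = P + Suc j * (t - 1)" using Suc.prems t unfolding s_def by auto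
  then have "b + (t - 1) * gap s \<le> (t - 1) * gap (P + Suc j * (t - 1))"
    using gap_growth[OF t, of s] big[of s] t unfolding s_def by auto
  moreover have "j * b + (t - 1) * gap P \<le> (t - 1) * gap s"
    using Suc \<open>s + t < n\<close> t unfolding s_def by simp
  ultimately show ?case by simp
qed

lemma last_gap_bound:
  assumes K: "2 \<le> K" and t: "2 \<le> t" and n: "(4 * r - 1) * (K - 1) + 2 < n"
  shows "\<exists>J. n - 2 - (4 * r - 1) * (K - 1) < (J + 1) * (t - 1) \<and>
              J * b + (t - 1) * b \<le> (t - 1) * gap (n - 2)"
proof -
  define P T where "P = (4 * r - 1) * (K - 1)" and "T = t - 1"
  obtain i0 where "i0 < P" "b < gap i0" using early_big_gap[OF K] n unfolding P_def by auto
  then have big: "b < gap s" if "P \<le> s" "s + 1 < n" for s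
    using gap_mono[of i0 s] that by simp
  define J where "J = (n - 2 - P) div T"
  have "J * T + (n - 2 - P) mod T = n - 2 - P" unfolding J_def by (rule div_mult_mod_eq)
  moreover have "(n - 2 - P) mod T < T" using t T_def by simp
  moreover have "(J + 1) * T = J * T + T" by simp
  moreover have nP: "P + 2 < n" using n P_def by simp
  ultimately have J_bound: "n - 2 - P < (J + 1) * T" "P + J * T \<le> n - 2" by linarith+
  have "P + J * T + 1 < n" using J_bound nP by linarith
  then have "J * b + T * gap P \<le> T * gap (P + J * T)"
    using gap_telescope[of P J, OF t big] unfolding T_def by simp
  also have "\<dots> \<le> T * gap (n - 2)" using J_bound nP by (intro mult_le_mono2 gap_mono) auto
  finally have "J * b + T * gap P \<le> T * gap (n - 2)" .
  moreover have "T * b \<le> T * gap P" using big[of P] nP by simp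
  ultimately have "J * b + T * b \<le> T * gap (n - 2)" by linarith
  with J_bound(1) show ?thesis unfolding P_def T_def by blast
qed

end

lemma scaled_gap_bound:
  fixes R J T b G :: nat and x :: real
  assumes T: "1 \<le> T" and R: "R < (J + 1) * T" and chunks: "J * b + T * b \<le> T * G"
    and x: "real T ^ 2 * x \<le> real R"
  shows "real b * x \<le> real G"
proof -
  have "(J + 1) * T \<le> (J + T) * T" using T by (intro mult_le_mono1) simp
  then have "R \<le> (J + T) * T" using R by linarith
  then have R_le: "real R \<le> real (J + T) * real T" by (metis of_nat_le_iff of_nat_mult)
  have chunks': "real (J + T) * real b \<le> real T * real G"
    using chunks by (metis add_mult_distrib of_nat_le_iff of_nat_mult)
  have "real T ^ 2 * (real b * x) = real b * (real T ^ 2 * x)" by simp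
  also have "\<dots> \<le> real b * (real (J + T) * real T)" using x R_le by (intro mult_left_mono) auto
  also have "\<dots> = real (J + T) * real b * real T" by simp
  also have "\<dots> \<le> real T * real G * real T" using chunks' by (intro mult_right_mono) auto
  also have "\<dots> = real T ^ 2 * real G" by (simp add: power2_eq_square)
  finally show ?thesis using T by simp
qed

lemma prefix_leaves_quarter:
  fixes r k :: nat
  assumes r: "2 \<le> r" and k: "80 * r \<le> k"
  defines "K \<equiv> k div (10 * (4 * r - 4))"
  shows "2 \<le> K" "k \<le> 4 * (k div 2 - 2 - (4 * r - 1) * (K - 1))"
proof -
  obtain s where s: "r = s + 2" using r le_Suc_ex by (metis add.commute)
  have "2 * (10 * (4 * r - 4)) \<le> k" using k by simp
  then have "2 * (10 * (4 * r - 4)) div (10 * (4 * r - 4)) \<le> K" unfolding K_def by (rule div_le_mono)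
  then show "2 \<le> K" using r by simp
  have "K * (10 * (4 * r - 4)) \<le> k" unfolding K_def by (rule div_times_less_eq_dividend)
  moreover have "10 * (4 * r - 4) = 40 * s + 40" using s by simp
  ultimately have "K * (40 * s + 40) \<le> k" by simp
  moreover have "(4 * r - 1) * (K - 1) \<le> (4 * s + 7) * K" unfolding s by (intro mult_le_mono) auto
  ultimately have "40 * ((4 * r - 1) * (K - 1)) \<le> 7 * k" by (simp add: algebra_simps)
  then show "k \<le> 4 * (k div 2 - 2 - (4 * r - 1) * (K - 1))" using k r by linarith
qed

lemma scheme_wave_last_gap:
  fixes r k b M t :: nat and e :: real
    and gamma :: "nat \<Rightarrow> nat \<Rightarrow> nat" and rho :: "nat \<Rightarrow> nat \<times> nat" and w :: "nat \<Rightarrow> nat"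
  assumes r: "2 \<le> r" and k: "80 * r \<le> k"
    and t: "2 \<le> t" "real (t - 1) ^ 2 * real k powr (1 - e / 2) \<le> real k / 4"
    and gamma: "\<forall>i<r. (\<forall>x\<in>{1..b}. gamma i x < r \<and> gamma i x \<noteq> i) \<and>
                 \<not> (\<exists>w. mono_wave (gamma i) {1..b} (k div (10 * (4 * r - 4))) w)"
    and rho: "\<forall>g. rho g \<in> {..<r} \<times> {1..r}"
    and good: "\<forall>a d. 1 \<le> a \<and> a + (t - 1) * d \<le> M \<and> d > b \<longrightarrow> good_AP r b M rho t a d"
    and wave: "mono_wave (scheme_color r b gamma rho) {1..M} (k div 2) w"
  shows "real b * real k powr (1 - e / 2) \<le> real (w (k div 2 - 1) - w (k div 2 - 2))"
proof (cases "b = 0")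
  case False
  define K n P where "K = k div (10 * (4 * r - 4))" and "n = k div 2" and "P = (4 * r - 1) * (K - 1)"
  have K: "2 \<le> K" and quarter: "k \<le> 4 * (n - 2 - P)"
    using prefix_leaves_quarter[OF r k] unfolding K_def n_def P_def by auto
  have n: "P + 2 < n" using quarter k r by linarith
  interpret scheme_wave r b K gamma rho n M t w
    using False gamma rho good wave n unfolding K_def n_def by unfold_locales auto
  obtain J where J: "n - 2 - P < (J + 1) * (t - 1)" "J * b + (t - 1) * b \<le> (t - 1) * gap (n - 2)"
    using last_gap_bound[OF K t(1)] n unfolding P_def by auto
  have "real (t - 1) ^ 2 * real k powr (1 - e / 2) \<le> real (n - 2 - P)"
    using t(2) quarter by linarith
  moreover have "1 \<le> t - 1" using t(1) by simp
  ultimately have "real b * real k powr (1 - e / 2) \<le> real (gap (n - 2))"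
    using scaled_gap_bound J by blast
  moreover have "n - 2 + 1 = n - 1" using n by simp
  ultimately show ?thesis unfolding n_def by simp
qed simp

theorem lemma2p3:
  fixes r :: nat and \<epsilon> :: real
  assumes "r \<ge> 2" and "\<epsilon> > 0"
  shows "\<exists>k0::nat. \<forall>k\<ge>k0.
    (let K = k div (10 * (4 * r - 4));
         b = AW K (r - 1) - 1;
         M = nat \<lfloor>real k powr (2 * real r - 1 - \<epsilon>) /
                   (2 ^ (r - 1) * (40 * real r) ^ (r\<^sup>2 - 1))\<rfloor>;
         L = log 2 (real r ^ 2 / (real r ^ 2 - 1));
         t = nat \<lfloor>(4 * real r - 2) * (2 * real r + 1) / L * log 2 (real k)
                   + (2 * real r + 1) * (log 2 (real r) + 1) / L\<rfloor>
     in \<forall>(gamma :: nat \<Rightarrow> nat \<Rightarrow> nat) (rho :: nat \<Rightarrow> nat \<times> nat).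
          (\<forall>i<r. (\<forall>x\<in>{1..b}. gamma i x < r \<and> gamma i x \<noteq> i) \<and>
                 \<not> (\<exists>w. mono_wave (gamma i) {1..b} K w)) \<longrightarrow>
          (\<forall>g. rho g \<in> {..<r} \<times> {1..r}) \<longrightarrow>
          (\<forall>a d. 1 \<le> a \<and> a + (t - 1) * d \<le> M \<and> d > b \<longrightarrow> good_AP r b M rho t a d) \<longrightarrow>
          (\<forall>w. mono_wave (scheme_color r b gamma rho) {1..M} (k div 2) w \<longrightarrow>
               real (w (k div 2 - 1) - w (k div 2 - 2)) \<ge> real b * real k powr (1 - \<epsilon> / 2)))"
proof -
  define L where "L = log 2 (real r ^ 2 / (real r ^ 2 - 1))"
  have "(2::real) ^ 2 \<le> real r ^ 2" using assms(1) by (intro power_mono) auto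
  then have L: "0 < L" "L \<le> 1" using log2_ratio_bounds[of "real r ^ 2"] unfolding L_def by auto
  define A B where "A = (4 * real r - 2) * (2 * real r + 1) / L"
    and "B = (2 * real r + 1) * (log 2 (real r) + 1) / L"
  define t where "t k = nat \<lfloor>A * log 2 (real k) + B\<rfloor>" for k :: nat
  have A: "0 \<le> A" using L assms(1) unfolding A_def by simp
  have "0 \<le> log 2 (real r)" using assms(1) by simp
  then have "2 \<le> (2 * real r + 1) * (log 2 (real r) + 1)"
    using assms(1) mult_mono[of 2 "2 * real r + 1" 1 "log 2 (real r) + 1"] by simp
  with L have B: "2 \<le> B" unfolding B_def by (simp add: le_divide_eq mult_left_le order_trans)
  obtain k0 where k0: "\<And>k. k0 \<le> k \<Longrightarrow>
      80 * r \<le> k \<and> 2 \<le> t k \<and> real (t k - 1) ^ 2 * real k powr (1 - \<epsilon> / 2) \<le> real k / 4"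
    using eventually_conj[OF eventually_ge_at_top eventually_floor_log_sq_powr_le[OF assms(2) A B]]
    unfolding eventually_sequentially t_def by blast
  show ?thesis
    unfolding Let_def
    by (intro exI[of _ k0] allI impI, rule scheme_wave_last_gap[where e = \<epsilon>])
      (use assms k0[unfolded t_def A_def B_def L_def] in auto)
qed

end
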